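(* Let $E$ be an end of revolution in $\mathbb{M}^3(\kappa)$ that is isometric to $\mathbb{M}^2_w\setminus B_\rho(o_w)$ for some rotationally symmetric model surface $\mathbb{M}^2_w$ with radius $\Lambda=\infty$ and some $\rho>0$. Then $E$ is parabolic if and only if $\int_\rho^\infty\frac{dt}{w(t)}=\infty$. Moreover, if $\int_\rho^\infty\frac{\int_0^t w(s)\,ds}{w(t)}\,dt=\infty$, then there exist a compact set $K\subset E$ and a $1$-superharmonic function $v$ on $E\setminus K$ (i.e. $-\Delta v+v\ge0$) such that $v(x)\to\infty$ as $x\to\infty$.
   Context: An end of revolution in $\mathbb{M}^3(\kappa)$ is the image of $(t,\theta)\mapsto R_\theta(\beta(t))$, where $\beta:[0,\infty)\to\mathbb{M}^2(\kappa)$ is a smooth regular curve of infinite length in a totally geodesic surface containing a geodesic $\sigma$, not meeting $\sigma$, and $R_\theta$ ranges over the rotations about $\sigma$, with induced metric. A $w$-model space $\mathbb{M}^2_w$ is a simply connected smooth surface with center point $o_w$ such that $\mathbb{M}^2_w\setminus\{o_w\}$ is isometric to $(0,\Lambda)\times\mathbb{S}^1$ with metric $dr^2+w(r)^2d\theta^2$, $w>0$ on $(0,\Lambda)$, $w(0)=0$, $w'(0)=1$, $w^{(2k)}(0)=0$; $B_\rho(o_w)$ is the geodesic ball of radius $\rho$ about $o_w$. An end is parabolic if every bounded harmonic function on it is determined by its boundary values. "$v(x)\to\infty$ as $x\to\infty$" means $v$ tends to infinity as $x$ leaves every compact set. *)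

theory Defs
  imports "HOL-Analysis.Analysis"
begin

definition smooth_fun :: "(real \<Rightarrow> real) \<Rightarrow> bool" where
  "smooth_fun f \<longleftrightarrow> (\<forall>k x. ((deriv ^^ k) f) differentiable (at x))"

text \<open>Warping function of a w-model space with radius Lambda = infinity.\<close>
definition model_profile :: "(real \<Rightarrow> real) \<Rightarrow> bool" where
  "model_profile w \<longleftrightarrow> smooth_fun w \<and> w 0 = 0 \<and> deriv w 0 = 1 \<and>
     (\<forall>k. (deriv ^^ (2 * k)) w 0 = 0) \<and> (\<forall>r>0. w r > 0)"

text \<open>The end M_w minus the open geodesic ball B_rho(o_w), in polar coordinates
  (r, z) with r the distance to o_w and z on the unit circle.\<close>
definition model_end :: "real \<Rightarrow> (real \<times> complex) set" where
  "model_end \<rho> = {(r, z). r \<ge> \<rho> \<and> cmod z = 1}"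

definition pullback :: "(real \<times> complex \<Rightarrow> real) \<Rightarrow> real \<times> real \<Rightarrow> real" where
  "pullback u = (\<lambda>(r, \<theta>). u (r, cis \<theta>))"

definition d_r :: "(real \<times> real \<Rightarrow> real) \<Rightarrow> real \<times> real \<Rightarrow> real" where
  "d_r f = (\<lambda>(r, \<theta>). deriv (\<lambda>s. f (s, \<theta>)) r)"

definition d_th :: "(real \<times> real \<Rightarrow> real) \<Rightarrow> real \<times> real \<Rightarrow> real" where
  "d_th f = (\<lambda>(r, \<theta>). deriv (\<lambda>t. f (r, t)) \<theta>)"

definition C2_on :: "(real \<times> real) set \<Rightarrow> (real \<times> real \<Rightarrow> real) \<Rightarrow> bool" where
  "C2_on S f \<longleftrightarrow> open S \<and>
     (\<forall>p\<in>S. f differentiable (at p)) \<and>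
     (\<forall>p\<in>S. d_r f differentiable (at p)) \<and>
     (\<forall>p\<in>S. d_th f differentiable (at p)) \<and>
     continuous_on S (d_r (d_r f)) \<and> continuous_on S (d_th (d_th f)) \<and>
     continuous_on S (d_r (d_th f)) \<and> continuous_on S (d_th (d_r f))"

text \<open>Laplace-Beltrami operator of dr^2 + w(r)^2 dtheta^2 in polar coordinates.\<close>
definition model_lap :: "(real \<Rightarrow> real) \<Rightarrow> (real \<times> real \<Rightarrow> real) \<Rightarrow> real \<times> real \<Rightarrow> real" where
  "model_lap w f = (\<lambda>(r, \<theta>). d_r (d_r f) (r, \<theta>) + deriv w r / w r * d_r f (r, \<theta>)
                          + d_th (d_th f) (r, \<theta>) / (w r)^2)"

definition harmonic_coords :: "(real \<Rightarrow> real) \<Rightarrow> (real \<times> real) set \<Rightarrow> (real \<times> real \<Rightarrow> real) \<Rightarrow> bool" where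
  "harmonic_coords w U f \<longleftrightarrow> C2_on U f \<and> (\<forall>p\<in>U. model_lap w f p = 0)"

text \<open>Parabolicity: every bounded harmonic function (continuous up to the boundary
  r = rho, harmonic in the interior) is determined by its boundary values.\<close>
definition parabolic_model_end :: "(real \<Rightarrow> real) \<Rightarrow> real \<Rightarrow> bool" where
  "parabolic_model_end w \<rho> \<longleftrightarrow>
     (\<forall>u1 u2. bounded (u1 ` model_end \<rho>) \<and> bounded (u2 ` model_end \<rho>) \<and>
        continuous_on (model_end \<rho>) u1 \<and> continuous_on (model_end \<rho>) u2 \<and>
        harmonic_coords w {(r, \<theta>). r > \<rho>} (pullback u1) \<and>
        harmonic_coords w {(r, \<theta>). r > \<rho>} (pullback u2) \<and>
        (\<forall>z. cmod z = 1 \<longrightarrow> u1 (\<rho>, z) = u2 (\<rho>, z))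
        \<longrightarrow> (\<forall>x\<in>model_end \<rho>. u1 x = u2 x))"

definition one_superharmonic_off :: "(real \<Rightarrow> real) \<Rightarrow> real \<Rightarrow> (real \<times> complex) set
     \<Rightarrow> (real \<times> complex \<Rightarrow> real) \<Rightarrow> bool" where
  "one_superharmonic_off w \<rho> K v \<longleftrightarrow>
     continuous_on (model_end \<rho> - K) v \<and>
     C2_on {(r, \<theta>). r > \<rho> \<and> (r, cis \<theta>) \<notin> K} (pullback v) \<and>
     (\<forall>p\<in>{(r, \<theta>). r > \<rho> \<and> (r, cis \<theta>) \<notin> K}.
        - model_lap w (pullback v) p + pullback v p \<ge> 0)"

definition tends_to_infinity_on :: "('a::topological_space) set \<Rightarrow> ('a \<Rightarrow> real) \<Rightarrow> bool" where
  "tends_to_infinity_on A v \<longleftrightarrow> (\<forall>M. \<exists>C. compact C \<and> (\<forall>x\<in>A - C. v x \<ge> M))"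

end

theory Submission
  imports Defs
begin

text \<open>
  A radial function \<open>h(r) = \<integral>\<^sub>\<rho>\<^sup>r \<phi>/w\<close> satisfies \<open>\<Delta>h = \<phi>'/w\<close>. For \<open>\<phi> = 1\<close> it is harmonic and
  vanishes on the boundary circle; when \<open>\<integral> 1/w < \<infinity>\<close> it is bounded and non-constant, so it cannot be
  told apart from \<open>0\<close> by boundary values. When \<open>\<integral> 1/w = \<infinity>\<close> it is instead a barrier: for a
  bounded harmonic difference \<open>u\<^sub>1 - u\<^sub>2\<close> vanishing on the boundary, \<open>u\<^sub>1 - u\<^sub>2 - \<epsilon>h\<close> is negative
  far out, and adding a small multiple of the strictly subharmonic radial function with
  \<open>\<phi>(s) = s - \<rho>\<close> rules out a positive interior maximum by the second derivative test.
  Finally \<open>\<phi>(s) = \<integral>\<^sub>0\<^sup>s w\<close> gives \<open>\<Delta>h = 1\<close>, so \<open>v = 1 + h\<close> satisfies \<open>-\<Delta>v + v = h \<ge> 0\<close>, and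
  \<open>v \<rightarrow> \<infinity>\<close> is exactly the second divergence hypothesis.
\<close>

section \<open>One-variable calculus\<close>

lemma interior_max_second_deriv:
  fixes f f' :: "real \<Rightarrow> real"
  assumes "a < x" "x < b" and max: "\<And>y. a < y \<Longrightarrow> y < b \<Longrightarrow> f y \<le> f x"
    and f': "\<And>y. a < y \<Longrightarrow> y < b \<Longrightarrow> (f has_real_derivative f' y) (at y)"
    and f'': "(f' has_real_derivative L) (at x)"
  shows "f' x = 0 \<and> L \<le> 0"
proof -
  have crit: "f' x = 0"
  proof (rule DERIV_local_max[OF f'[OF assms(1,2)], of "min (x - a) (b - x)"])
    show "0 < min (x - a) (b - x)" using assms(1,2) by auto
    show "\<forall>y. \<bar>x - y\<bar> < min (x - a) (b - x) \<longrightarrow> f y \<le> f x"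
      using max by (auto simp: abs_if split: if_splits)
  qed
  moreover have "L \<le> 0"
  proof (rule ccontr)
    assume "\<not> L \<le> 0"
    then obtain d where d: "d > 0" "\<And>h. h > 0 \<Longrightarrow> h < d \<Longrightarrow> f' x < f' (x + h)"
      using DERIV_pos_inc_right[OF f''] by force
    define h where "h = min (d / 2) ((b - x) / 2)"
    have h: "h > 0" "h < d" "x + h < b"
      using d(1) assms(2) unfolding h_def by (auto simp: min_def field_simps)
    have "f x < f (x + h)"
    proof (rule DERIV_pos_imp_increasing_open[of x "x + h" f])
      show "\<exists>y. DERIV f t :> y \<and> 0 < y" if "x < t" "t < x + h" for t
        using d(2)[of "t - x"] f'[of t] that assms(1) h crit by auto
      show "continuous_on {x..x + h} f"
        by (rule DERIV_continuous_on[where D = f'])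
           (use f' assms(1) h in \<open>auto intro: has_field_derivative_at_within\<close>)
    qed (use h in simp)
    with max[of "x + h"] h assms(1) show False by auto
  qed
  ultimately show ?thesis by simp
qed

lemma integral_upper_has_real_derivative:
  fixes h :: "real \<Rightarrow> real"
  assumes "continuous_on {c..} h" "r > c"
  shows "((\<lambda>x. integral {c..x} h) has_real_derivative h r) (at r)"
proof -
  have "((\<lambda>x. integral {c..x} h) has_real_derivative h r) (at r within {c..r + 1})"
    by (rule integral_has_real_derivative) (use assms in \<open>auto intro: continuous_on_subset\<close>)
  moreover have "at r within {c..r + 1} = at r"
    by (rule at_within_interior) (use assms in auto)
  ultimately show ?thesis by simp
qed

lemma continuous_on_integral_upper:
  fixes h :: "real \<Rightarrow> real"
  assumes "continuous_on {c..} h"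
  shows "continuous_on {c..} (\<lambda>x. integral {c..x} h)"
  unfolding continuous_on_eq_continuous_within
proof
  fix x :: real assume "x \<in> {c..}"
  have "continuous_on {c..x + 1} (\<lambda>x. integral {c..x} h)"
    by (rule indefinite_integral_continuous_1, rule integrable_continuous_real)
       (use assms in \<open>auto intro: continuous_on_subset\<close>)
  then have "continuous (at x within {c..x + 1}) (\<lambda>x. integral {c..x} h)"
    using \<open>x \<in> {c..}\<close> by (simp add: continuous_on_eq_continuous_within)
  moreover have "at x within {c..} = at x within {c..x + 1}"
    by (rule at_within_nhd[where S = "{..<x + 1}"]) auto
  ultimately show "continuous (at x within {c..}) (\<lambda>x. integral {c..x} h)"
    by (simp add: continuous_within)
qed

lemma integral_upper_nonneg:
  fixes h :: "real \<Rightarrow> real"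
  assumes "continuous_on {c..} h" "\<And>x. x \<ge> c \<Longrightarrow> h x \<ge> 0"
  shows "integral {c..R} h \<ge> 0"
  by (rule integral_nonneg, rule integrable_continuous_real)
     (use assms in \<open>auto intro: continuous_on_subset\<close>)

lemma integral_upper_mono:
  fixes h :: "real \<Rightarrow> real"
  assumes "continuous_on {c..} h" "\<And>x. x \<ge> c \<Longrightarrow> h x \<ge> 0" "R \<le> R'"
  shows "integral {c..R} h \<le> integral {c..R'} h"
  by (rule integral_subset_le)
     (use assms in \<open>auto intro!: integrable_continuous_real intro: continuous_on_subset\<close>)

lemma nn_integral_atLeast_eq_SUP:
  fixes h :: "real \<Rightarrow> real"
  assumes cont: "continuous_on {c..} h" and nonneg: "\<And>x. x \<ge> c \<Longrightarrow> h x \<ge> 0"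
  shows "(\<integral>\<^sup>+ t. ennreal (indicator {c..} t * h t) \<partial>lborel)
           = (SUP n::nat. ennreal (integral {c..c + real n} h))"
proof -
  define f where "f n t = ennreal (indicator {c..c + real n} t * h t)" for n :: nat and t
  have "incseq f"
    by (intro incseq_SucI le_funI)
       (use nonneg in \<open>auto intro!: ennreal_leI simp: f_def indicator_def\<close>)
  moreover have "f n \<in> borel_measurable lborel" for n
  proof -
    have "(\<lambda>x. indicator {c..c + real n} x *\<^sub>R h x) \<in> borel_measurable borel"
      by (rule borel_measurable_continuous_on_indicator)
         (use cont in \<open>auto intro: continuous_on_subset\<close>)
    then show ?thesis unfolding f_def by (simp add: measurable_lborel1)
  qed
  ultimately have "(\<integral>\<^sup>+ t. (SUP n. f n t) \<partial>lborel) = (SUP n. integral\<^sup>N lborel (f n))"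
    by (rule nn_integral_monotone_convergence_SUP)
  moreover have "(SUP n. f n t) = ennreal (indicator {c..} t * h t)" for t
  proof (cases "t \<ge> c")
    case True
    have "f (nat \<lceil>t - c\<rceil>) t = ennreal (indicator {c..} t * h t)"
      using True by (simp add: f_def indicator_def) linarith
    then have "ennreal (indicator {c..} t * h t) \<le> (SUP n. f n t)"
      by (metis UNIV_I SUP_upper)
    moreover have "(SUP n. f n t) \<le> ennreal (indicator {c..} t * h t)"
      by (rule SUP_least)
         (use True nonneg[of t] in \<open>auto simp: f_def indicator_def intro!: ennreal_leI\<close>)
    ultimately show ?thesis by (rule antisym[rotated])
  qed (simp add: f_def indicator_def)
  moreover have "integral\<^sup>N lborel (f n) = ennreal (integral {c..c + real n} h)" for n
  proof -
    have "integral\<^sup>N lborel (\<lambda>x. indicator {c..c + real n} x * h x) = integral {c..c + real n} h"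
      by (rule nn_integral_has_integral_lebesgue)
         (use nonneg cont in \<open>auto intro!: integrable_integral integrable_continuous_real
            intro: continuous_on_subset\<close>)
    then show ?thesis by (simp add: f_def[abs_def])
  qed
  ultimately show ?thesis by simp
qed

lemma nn_integral_atLeast_eq_infinity_iff:
  fixes h :: "real \<Rightarrow> real"
  assumes cont: "continuous_on {c..} h" and nonneg: "\<And>x. x \<ge> c \<Longrightarrow> h x \<ge> 0"
  shows "(\<integral>\<^sup>+ t. ennreal (indicator {c..} t * h t) \<partial>lborel) = \<infinity>
           \<longleftrightarrow> (\<forall>M. \<exists>R. M < integral {c..R} h)"
proof -
  have "(\<integral>\<^sup>+ t. ennreal (indicator {c..} t * h t) \<partial>lborel)
          = (SUP n::nat. ennreal (integral {c..c + real n} h))" (is "_ = (SUP n. ?I n)")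
    by (rule nn_integral_atLeast_eq_SUP[OF assms])
  moreover have "(SUP n. ?I n) = \<infinity> \<longleftrightarrow> (\<forall>M. \<exists>R. M < integral {c..R} h)"
  proof (rule iffI)
    assume "(SUP n. ?I n) = \<infinity>"
    then have unbounded: "\<forall>x<top. \<exists>n. x < ?I n"
      by (simp only: SUP_eq_top_iff[symmetric] infinity_ennreal_def) simp
    show "\<forall>M. \<exists>R. M < integral {c..R} h"
    proof
      fix M
      obtain n where "ennreal (max M 0) < ?I n"
        using unbounded by (metis ennreal_less_top)
      then have "max M 0 < integral {c..c + real n} h"
        by (subst (asm) ennreal_less_iff) auto
      then show "\<exists>R. M < integral {c..R} h" by auto
    qed
  next
    assume unbounded: "\<forall>M. \<exists>R. M < integral {c..R} h"
    show "(SUP n. ?I n) = \<infinity>"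
      unfolding SUP_eq_top_iff infinity_ennreal_def
    proof (intro allI impI)
      fix x :: ennreal assume "x < top"
      then obtain M where M: "x = ennreal M" "M \<ge> 0" by (cases x) auto
      obtain R where R: "M < integral {c..R} h" using unbounded by blast
      have "integral {c..R} h \<le> integral {c..c + real (nat \<lceil>R - c\<rceil>)} h"
        using integral_upper_mono[OF cont nonneg] real_nat_ceiling_ge[of "R - c"] by simp
      then have "x < ?I (nat \<lceil>R - c\<rceil>)"
        using M R by (simp add: ennreal_lessI)
      then show "\<exists>n\<in>UNIV. x < ?I n" by blast
    qed
  qed
  ultimately show ?thesis by simp
qed

context
  fixes w :: "real \<Rightarrow> real"
  assumes profile: "model_profile w"
begin

lemma model_profile_has_real_derivative: "(w has_real_derivative deriv w x) (at x)"
  using profile DERIV_deriv_iff_real_differentiable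
  unfolding model_profile_def smooth_fun_def by (metis funpow_0)

lemma model_profile_continuous_on: "continuous_on A w"
  by (rule continuous_at_imp_continuous_on)
     (use model_profile_has_real_derivative DERIV_isCont in blast)

lemma model_profile_deriv_continuous_on: "continuous_on A (deriv w)"
proof (rule continuous_at_imp_continuous_on, intro ballI differentiable_imp_continuous_within)
  fix x
  have "((deriv ^^ 1) w) differentiable at x"
    using profile unfolding model_profile_def smooth_fun_def by blast
  then show "deriv w differentiable at x" by simp
qed

lemma model_profile_pos: "r > 0 \<Longrightarrow> w r > 0"
  using profile unfolding model_profile_def by blast

lemma model_profile_nonneg: "r \<ge> 0 \<Longrightarrow> w r \<ge> 0"
  using model_profile_pos profile unfolding model_profile_def
  by (cases "r = 0") (auto simp: less_eq_real_def)

lemma model_profile_integral_nonneg: "integral {0..t} w \<ge> 0"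
  by (rule integral_upper_nonneg) (use model_profile_continuous_on model_profile_nonneg in auto)

end

section \<open>Radial functions\<close>

lemma differentiable_fst_comp:
  assumes "(g has_real_derivative D) (at (fst p))"
  shows "(\<lambda>p. g (fst p)) differentiable (at p)"
proof -
  have "((g \<circ> fst) has_derivative ((*) D \<circ> fst)) (at p)"
    using assms has_field_derivative_imp_has_derivative
    by (intro diff_chain_at has_derivative_fst has_derivative_ident) blast
  then show ?thesis unfolding differentiable_def o_def by blast
qed

lemma d_r_fst: "d_r (\<lambda>p. g (fst p)) = (\<lambda>p. deriv g (fst p))"
  by (auto simp: d_r_def)

lemma d_th_fst: "d_th (\<lambda>p. g (fst p)) = (\<lambda>p. 0)"
  by (auto simp: d_th_def)

lemma d_r_const: "d_r (\<lambda>p. c) = (\<lambda>p. 0)"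
  by (auto simp: d_r_def)

lemma d_th_const: "d_th (\<lambda>p. c) = (\<lambda>p. 0)"
  by (auto simp: d_th_def)

lemma pullback_fst: "pullback (\<lambda>x. g (fst x)) = (\<lambda>p. g (fst p))"
  by (auto simp: pullback_def)

lemma d_r_has_real_derivative:
  assumes "f differentiable (at (s, \<theta>))"
  shows "((\<lambda>x. f (x, \<theta>)) has_real_derivative d_r f (s, \<theta>)) (at s)"
proof -
  have "(f \<circ> (\<lambda>x. (x, \<theta>))) differentiable (at s)"
    using assms by (intro differentiable_chain_at derivative_intros) auto
  then show ?thesis
    unfolding d_r_def o_def using DERIV_deriv_iff_real_differentiable by fastforce
qed

lemma d_th_has_real_derivative:
  assumes "f differentiable (at (s, \<theta>))"
  shows "((\<lambda>t. f (s, t)) has_real_derivative d_th f (s, \<theta>)) (at \<theta>)"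
proof -
  have "(f \<circ> (\<lambda>t. (s, t))) differentiable (at \<theta>)"
    using assms by (intro differentiable_chain_at derivative_intros) auto
  then show ?thesis
    unfolding d_th_def o_def using DERIV_deriv_iff_real_differentiable by fastforce
qed

lemma open_half_plane: "open {(r, \<theta>::real). r > (\<rho>::real)}"
proof -
  have "{(r, \<theta>::real). r > \<rho>} = {\<rho><..} \<times> UNIV" by auto
  then show ?thesis by (simp add: open_Times)
qed

context
  fixes g g' g'' :: "real \<Rightarrow> real" and \<rho> :: real
  assumes g_deriv: "\<And>r. r > \<rho> \<Longrightarrow> (g has_real_derivative g' r) (at r)"
    and g'_deriv: "\<And>r. r > \<rho> \<Longrightarrow> (g' has_real_derivative g'' r) (at r)"
begin

lemma deriv_radial: "r > \<rho> \<Longrightarrow> deriv g r = g' r"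
  using g_deriv DERIV_imp_deriv by blast

lemma deriv_radial_has_real_derivative: "r > \<rho> \<Longrightarrow> (deriv g has_real_derivative g'' r) (at r)"
  by (rule has_field_derivative_transform_within_open[OF g'_deriv, of r "{\<rho><..}"])
     (auto simp: deriv_radial)

lemma C2_on_radial:
  assumes "continuous_on {\<rho><..} g''"
  shows "C2_on {(r, \<theta>). r > \<rho>} (\<lambda>p. g (fst p))"
proof -
  have "continuous_on {\<rho><..} (deriv (deriv g))"
    by (rule continuous_on_eq[OF assms])
       (auto intro: DERIV_imp_deriv[symmetric] deriv_radial_has_real_derivative)
  then have "continuous_on {(r, \<theta>). r > \<rho>} (\<lambda>p. deriv (deriv g) (fst p))"
    by (rule continuous_on_compose2) (auto intro: continuous_intros)
  moreover have "(\<lambda>p. g (fst p)) differentiable (at p)"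
      "(\<lambda>p. deriv g (fst p)) differentiable (at p)" if "fst p > \<rho>" for p
    using differentiable_fst_comp[OF g_deriv[OF that]]
      differentiable_fst_comp[OF deriv_radial_has_real_derivative[OF that]] by auto
  ultimately show ?thesis
    unfolding C2_on_def d_r_fst d_th_fst d_r_const d_th_const using open_half_plane
    by (auto simp: case_prod_beta)
qed

lemma model_lap_radial:
  "r > \<rho> \<Longrightarrow> model_lap w (\<lambda>p. g (fst p)) (r, \<theta>) = g'' r + deriv w r / w r * g' r"
  unfolding model_lap_def d_r_fst d_th_fst d_th_const
  by (simp add: deriv_radial DERIV_imp_deriv[OF deriv_radial_has_real_derivative])

end

definition radial_potential :: "(real \<Rightarrow> real) \<Rightarrow> real \<Rightarrow> (real \<Rightarrow> real) \<Rightarrow> real \<Rightarrow> real" where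
  "radial_potential w \<rho> \<phi> r = integral {\<rho>..r} (\<lambda>s. \<phi> s / w s)"

lemma radial_potential_base [simp]: "radial_potential w \<rho> \<phi> \<rho> = 0"
  by (simp add: radial_potential_def)

locale radial_source =
  fixes w :: "real \<Rightarrow> real" and \<rho> :: real and \<phi> \<phi>' :: "real \<Rightarrow> real"
  assumes profile: "model_profile w" and base_pos: "\<rho> > 0"
    and \<phi>_deriv: "\<And>s. s > \<rho> \<Longrightarrow> (\<phi> has_real_derivative \<phi>' s) (at s)"
    and \<phi>_cont: "continuous_on {\<rho>..} \<phi>" and \<phi>'_cont: "continuous_on {\<rho><..} \<phi>'"
begin

definition potential_deriv :: "real \<Rightarrow> real" where
  "potential_deriv s = \<phi> s / w s"

definition potential_deriv2 :: "real \<Rightarrow> real" where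
  "potential_deriv2 s = (\<phi>' s * w s - \<phi> s * deriv w s) / (w s)\<^sup>2"

lemma w_pos: "s \<ge> \<rho> \<Longrightarrow> w s > 0"
  using model_profile_pos[OF profile] base_pos by simp

lemma potential_deriv_continuous: "continuous_on {\<rho>..} potential_deriv"
  unfolding potential_deriv_def
  by (intro continuous_intros \<phi>_cont model_profile_continuous_on[OF profile]) (use w_pos in force)

lemma potential_deriv2_continuous: "continuous_on {\<rho><..} potential_deriv2"
  unfolding potential_deriv2_def
  by (intro continuous_intros \<phi>'_cont model_profile_continuous_on[OF profile]
        model_profile_deriv_continuous_on[OF profile] continuous_on_subset[OF \<phi>_cont])
     (auto dest: w_pos[OF less_imp_le])

lemma potential_has_real_derivative:
  "r > \<rho> \<Longrightarrow> (radial_potential w \<rho> \<phi> has_real_derivative potential_deriv r) (at r)"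
  using integral_upper_has_real_derivative[OF potential_deriv_continuous]
  by (simp add: radial_potential_def[abs_def] potential_deriv_def[abs_def])

lemma potential_deriv_has_real_derivative:
  "r > \<rho> \<Longrightarrow> (potential_deriv has_real_derivative potential_deriv2 r) (at r)"
  unfolding potential_deriv_def[abs_def] potential_deriv2_def using w_pos[of r]
  by (auto intro!: derivative_eq_intros \<phi>_deriv model_profile_has_real_derivative[OF profile]
      simp: power2_eq_square)

lemma potential_continuous: "continuous_on {\<rho>..} (radial_potential w \<rho> \<phi>)"
  using continuous_on_integral_upper[OF potential_deriv_continuous]
  by (simp add: radial_potential_def[abs_def] potential_deriv_def[abs_def])

lemma radial_ode:
  "r > \<rho> \<Longrightarrow> potential_deriv2 r + deriv w r / w r * potential_deriv r = \<phi>' r / w r"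
  using w_pos[of r]
  by (simp add: potential_deriv_def potential_deriv2_def field_simps power2_eq_square)

lemma C2_on_potential: "C2_on {(r, \<theta>). r > \<rho>} (\<lambda>p. radial_potential w \<rho> \<phi> (fst p))"
  by (rule C2_on_radial[OF potential_has_real_derivative potential_deriv_has_real_derivative
        potential_deriv2_continuous])

lemma model_lap_potential:
  assumes "r > \<rho>"
  shows "model_lap w (\<lambda>p. radial_potential w \<rho> \<phi> (fst p)) (r, \<theta>) = \<phi>' r / w r"
  using model_lap_radial[OF potential_has_real_derivative potential_deriv_has_real_derivative assms]
    radial_ode[OF assms] by simp

context
  assumes \<phi>_nonneg: "\<And>s. s \<ge> \<rho> \<Longrightarrow> \<phi> s \<ge> 0"
begin

lemma potential_deriv_nonneg: "s \<ge> \<rho> \<Longrightarrow> potential_deriv s \<ge> 0"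
  using \<phi>_nonneg w_pos by (simp add: potential_deriv_def less_imp_le)

lemma potential_nonneg: "radial_potential w \<rho> \<phi> r \<ge> 0"
  using integral_upper_nonneg[OF potential_deriv_continuous potential_deriv_nonneg]
  by (simp add: radial_potential_def potential_deriv_def[abs_def])

lemma potential_mono: "r \<le> r' \<Longrightarrow> radial_potential w \<rho> \<phi> r \<le> radial_potential w \<rho> \<phi> r'"
  using integral_upper_mono[OF potential_deriv_continuous potential_deriv_nonneg]
  by (simp add: radial_potential_def potential_deriv_def[abs_def])

lemma nn_integral_eq_infinity_iff_potential_unbounded:
  "(\<integral>\<^sup>+ t. ennreal (indicator {\<rho>..} t * (\<phi> t / w t)) \<partial>lborel) = \<infinity>
     \<longleftrightarrow> (\<forall>M. \<exists>R. M < radial_potential w \<rho> \<phi> R)"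
  using nn_integral_atLeast_eq_infinity_iff[OF potential_deriv_continuous potential_deriv_nonneg]
  by (simp add: radial_potential_def potential_deriv_def[abs_def])

end

end

lemma radial_source_const:
  "model_profile w \<Longrightarrow> \<rho> > 0 \<Longrightarrow> radial_source w \<rho> (\<lambda>_. c) (\<lambda>_. 0)"
  by unfold_locales auto

lemma radial_source_linear:
  "model_profile w \<Longrightarrow> \<rho> > 0 \<Longrightarrow> radial_source w \<rho> (\<lambda>s. s - \<rho>) (\<lambda>_. 1)"
  by unfold_locales (auto intro!: derivative_eq_intros continuous_intros)

lemma radial_source_area:
  assumes profile: "model_profile w" and "\<rho> > 0"
  shows "radial_source w \<rho> (\<lambda>t. integral {0..t} w) w"
proof
  show "((\<lambda>t. integral {0..t} w) has_real_derivative w s) (at s)" if "s > \<rho>" for s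
    by (rule integral_upper_has_real_derivative)
       (use that \<open>\<rho> > 0\<close> model_profile_continuous_on[OF profile] in auto)
  show "continuous_on {\<rho>..} (\<lambda>t. integral {0..t} w)"
    by (rule continuous_on_subset[OF continuous_on_integral_upper])
       (use \<open>\<rho> > 0\<close> model_profile_continuous_on[OF profile] in auto)
qed (use assms model_profile_continuous_on[OF profile] in auto)

section \<open>Maximum principle\<close>

lemma harmonic_difference_no_interior_max:
  fixes U U' :: "real \<times> real \<Rightarrow> real" and g g' g'' :: "real \<Rightarrow> real"
  assumes profile: "model_profile w" and "\<rho> \<ge> 0"
    and harm1: "harmonic_coords w {(r, \<theta>). r > \<rho>} U"
    and harm2: "harmonic_coords w {(r, \<theta>). r > \<rho>} U'"
    and g_deriv: "\<And>s. s > \<rho> \<Longrightarrow> (g has_real_derivative g' s) (at s)"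
    and g'_deriv: "(g' has_real_derivative g'' rm) (at rm)"
    and strict: "g'' rm + deriv w rm / w rm * g' rm > 0"
    and "\<rho> \<le> a" "a < rm" "rm < b"
  defines "V \<equiv> \<lambda>p. U p - U' p + g (fst p)"
  assumes max_r: "\<And>s. a < s \<Longrightarrow> s < b \<Longrightarrow> V (s, \<theta>m) \<le> V (rm, \<theta>m)"
    and max_\<theta>: "\<And>\<theta>. V (rm, \<theta>) \<le> V (rm, \<theta>m)"
  shows False
proof -
  have in_half_plane: "(s, t) \<in> {(r, \<theta>). r > \<rho>}" if "s > \<rho>" for s t
    using that by simp
  have rm_gt: "rm > \<rho>" using assms by linarith
  note U_C2 = harm1[unfolded harmonic_coords_def C2_on_def]
  note U'_C2 = harm2[unfolded harmonic_coords_def C2_on_def]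
  define Vr where "Vr s = d_r U (s, \<theta>m) - d_r U' (s, \<theta>m) + g' s" for s
  define Vrr where "Vrr = d_r (d_r U) (rm, \<theta>m) - d_r (d_r U') (rm, \<theta>m) + g'' rm"
  have r_test: "Vr rm = 0 \<and> Vrr \<le> 0"
  proof (rule interior_max_second_deriv[of a rm b "\<lambda>s. V (s, \<theta>m)"])
    show "((\<lambda>s. V (s, \<theta>m)) has_real_derivative Vr s) (at s)" if "a < s" "s < b" for s
      unfolding V_def Vr_def fst_conv
      using d_r_has_real_derivative[of U s \<theta>m] d_r_has_real_derivative[of U' s \<theta>m]
        U_C2 U'_C2 in_half_plane g_deriv[of s] that \<open>\<rho> \<le> a\<close>
      by (auto intro!: derivative_eq_intros)
    show "(Vr has_real_derivative Vrr) (at rm)"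
      unfolding Vr_def Vrr_def
      using d_r_has_real_derivative[of "d_r U" rm \<theta>m] d_r_has_real_derivative[of "d_r U'" rm \<theta>m]
        U_C2 U'_C2 in_half_plane[OF rm_gt] g'_deriv
      by (auto intro!: derivative_eq_intros)
  qed (use assms in auto)
  define V\<theta> where "V\<theta> t = d_th U (rm, t) - d_th U' (rm, t)" for t
  define V\<theta>\<theta> where "V\<theta>\<theta> = d_th (d_th U) (rm, \<theta>m) - d_th (d_th U') (rm, \<theta>m)"
  have \<theta>_test: "V\<theta> \<theta>m = 0 \<and> V\<theta>\<theta> \<le> 0"
  proof (rule interior_max_second_deriv[of "\<theta>m - 1" \<theta>m "\<theta>m + 1" "\<lambda>t. V (rm, t)"])
    show "((\<lambda>t. V (rm, t)) has_real_derivative V\<theta> t) (at t)" for t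
      unfolding V_def V\<theta>_def fst_conv
      using d_th_has_real_derivative[of U rm t] d_th_has_real_derivative[of U' rm t]
        U_C2 U'_C2 in_half_plane[OF rm_gt]
      by (auto intro!: derivative_eq_intros)
    show "(V\<theta> has_real_derivative V\<theta>\<theta>) (at \<theta>m)"
      unfolding V\<theta>_def V\<theta>\<theta>_def
      using d_th_has_real_derivative[of "d_th U" rm \<theta>m]
        d_th_has_real_derivative[of "d_th U'" rm \<theta>m] U_C2 U'_C2 in_half_plane[OF rm_gt]
      by (auto intro!: derivative_eq_intros)
  qed (use max_\<theta> in auto)
  define c where "c = deriv w rm / w rm"
  have "w rm > 0" using model_profile_pos[OF profile] rm_gt \<open>\<rho> \<ge> 0\<close> by simp
  have "d_r (d_r f) (rm, \<theta>m) + c * d_r f (rm, \<theta>m) + d_th (d_th f) (rm, \<theta>m) / (w rm)\<^sup>2 = 0"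
    if "harmonic_coords w {(r, \<theta>). r > \<rho>} f" for f
    using that in_half_plane[OF rm_gt] unfolding harmonic_coords_def model_lap_def c_def by auto
  from this[OF harm1] this[OF harm2]
  have "Vrr + c * Vr rm + V\<theta>\<theta> / (w rm)\<^sup>2 = g'' rm + c * g' rm"
    unfolding Vrr_def Vr_def V\<theta>\<theta>_def by (simp add: algebra_simps diff_divide_distrib)
  moreover have "V\<theta>\<theta> / (w rm)\<^sup>2 \<le> 0"
    using \<theta>_test by (simp add: divide_nonpos_nonneg)
  ultimately show False using r_test strict by (simp add: c_def)
qed

lemma harmonic_difference_barrier_no_interior_max:
  fixes u1 u2 :: "real \<times> complex \<Rightarrow> real" and \<epsilon> :: real
  assumes profile: "model_profile w" and "\<rho> > 0"
    and harm1: "harmonic_coords w {(r, \<theta>). r > \<rho>} (pullback u1)"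
    and harm2: "harmonic_coords w {(r, \<theta>). r > \<rho>} (pullback u2)"
    and "\<delta> > 0" "\<rho> < r1" "r1 < R" "cmod z1 = 1"
  defines "v \<equiv> \<lambda>y. u1 y - u2 y + (\<delta> * radial_potential w \<rho> (\<lambda>s. s - \<rho>) (fst y)
                                    - \<epsilon> * radial_potential w \<rho> (\<lambda>_. 1) (fst y))"
  assumes max: "\<And>r z. \<rho> < r \<Longrightarrow> r < R \<Longrightarrow> cmod z = 1 \<Longrightarrow> v (r, z) \<le> v (r1, z1)"
  shows False
proof -
  interpret F: radial_source w \<rho> "\<lambda>_. 1" "\<lambda>_. 0"
    by (rule radial_source_const[OF profile \<open>\<rho> > 0\<close>])
  interpret G: radial_source w \<rho> "\<lambda>s. s - \<rho>" "\<lambda>_. 1"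
    by (rule radial_source_linear[OF profile \<open>\<rho> > 0\<close>])
  define g where "g r = \<delta> * radial_potential w \<rho> (\<lambda>s. s - \<rho>) r - \<epsilon> * radial_potential w \<rho> (\<lambda>_. 1) r"
    for r
  let ?g' = "\<lambda>r. \<delta> * G.potential_deriv r - \<epsilon> * F.potential_deriv r"
  let ?g'' = "\<lambda>r. \<delta> * G.potential_deriv2 r - \<epsilon> * F.potential_deriv2 r"
  have z1: "cis (Arg z1) = z1"
    using cis_Arg[of z1] \<open>cmod z1 = 1\<close> by (cases "z1 = 0") (auto simp: sgn_div_norm)
  show False
  proof (rule harmonic_difference_no_interior_max
      [where g = g and g' = ?g' and g'' = ?g'' and a = \<rho> and b = R and \<theta>m = "Arg z1",
       OF profile _ harm1 harm2])
    show "(g has_real_derivative ?g' s) (at s)" if "s > \<rho>" for s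
      unfolding g_def
      by (intro DERIV_diff DERIV_cmult F.potential_has_real_derivative
          G.potential_has_real_derivative that)
    show "(?g' has_real_derivative ?g'' r1) (at r1)"
      by (intro DERIV_diff DERIV_cmult F.potential_deriv_has_real_derivative
          G.potential_deriv_has_real_derivative \<open>\<rho> < r1\<close>)
    have "?g'' r1 + deriv w r1 / w r1 * ?g' r1
          = \<delta> * (G.potential_deriv2 r1 + deriv w r1 / w r1 * G.potential_deriv r1)
            - \<epsilon> * (F.potential_deriv2 r1 + deriv w r1 / w r1 * F.potential_deriv r1)"
      by (simp add: algebra_simps)
    also have "\<dots> = \<delta> / w r1"
      by (simp only: F.radial_ode[OF \<open>\<rho> < r1\<close>] G.radial_ode[OF \<open>\<rho> < r1\<close>]) simp
    finally show "?g'' r1 + deriv w r1 / w r1 * ?g' r1 > 0"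
      using G.w_pos[of r1] \<open>\<rho> < r1\<close> \<open>\<delta> > 0\<close> by simp
    show "pullback u1 (s, Arg z1) - pullback u2 (s, Arg z1) + g (fst (s, Arg z1))
            \<le> pullback u1 (r1, Arg z1) - pullback u2 (r1, Arg z1) + g (fst (r1, Arg z1))"
      if "\<rho> < s" "s < R" for s
      using max[of s z1] that \<open>cmod z1 = 1\<close> by (simp add: pullback_def z1 v_def g_def)
    show "pullback u1 (r1, \<theta>) - pullback u2 (r1, \<theta>) + g (fst (r1, \<theta>))
            \<le> pullback u1 (r1, Arg z1) - pullback u2 (r1, Arg z1) + g (fst (r1, Arg z1))" for \<theta>
      using max[of r1 "cis \<theta>"] \<open>\<rho> < r1\<close> \<open>r1 < R\<close> by (simp add: pullback_def z1 v_def g_def)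
  qed (use \<open>\<rho> > 0\<close> \<open>\<rho> < r1\<close> \<open>r1 < R\<close> in auto)
qed

lemma harmonic_comparison:
  fixes u1 u2 :: "real \<times> complex \<Rightarrow> real"
  assumes profile: "model_profile w" and "\<rho> > 0"
    and unbounded: "\<forall>M. \<exists>R. M < radial_potential w \<rho> (\<lambda>_. 1) R"
    and bounded: "bounded (u1 ` model_end \<rho>)" "bounded (u2 ` model_end \<rho>)"
    and cont: "continuous_on (model_end \<rho>) u1" "continuous_on (model_end \<rho>) u2"
    and harm1: "harmonic_coords w {(r, \<theta>). r > \<rho>} (pullback u1)"
    and harm2: "harmonic_coords w {(r, \<theta>). r > \<rho>} (pullback u2)"
    and boundary: "\<And>z. cmod z = 1 \<Longrightarrow> u1 (\<rho>, z) \<le> u2 (\<rho>, z)"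
    and x0: "(r0, z0) \<in> model_end \<rho>"
  shows "u1 (r0, z0) \<le> u2 (r0, z0)"
proof (rule ccontr)
  interpret F: radial_source w \<rho> "\<lambda>_. 1" "\<lambda>_. 0"
    by (rule radial_source_const[OF profile \<open>\<rho> > 0\<close>])
  interpret G: radial_source w \<rho> "\<lambda>s. s - \<rho>" "\<lambda>_. 1"
    by (rule radial_source_linear[OF profile \<open>\<rho> > 0\<close>])
  let ?F = "radial_potential w \<rho> (\<lambda>_. 1)" and ?G = "radial_potential w \<rho> (\<lambda>s. s - \<rho>)"
  have F_nonneg: "?F r \<ge> 0" and G_nonneg: "?G r \<ge> 0" for r
    by (simp_all add: F.potential_nonneg G.potential_nonneg)
  assume "\<not> u1 (r0, z0) \<le> u2 (r0, z0)"
  define \<eta> where "\<eta> = u1 (r0, z0) - u2 (r0, z0)"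
  have "\<eta> > 0" using \<open>\<not> u1 (r0, z0) \<le> u2 (r0, z0)\<close> by (simp add: \<eta>_def)
  obtain B where "\<forall>x\<in>(\<lambda>y. u1 y - u2 y) ` model_end \<rho>. \<bar>x\<bar> \<le> B"
    using bounded_minus_comp[OF bounded] unfolding bounded_real by blast
  then have B: "\<And>y. y \<in> model_end \<rho> \<Longrightarrow> u1 y - u2 y \<le> B" by fastforce
  define \<epsilon> where "\<epsilon> = \<eta> / (2 * (?F r0 + 1))"
  have "\<epsilon> > 0" "\<epsilon> * ?F r0 < \<eta> / 2"
    using \<open>\<eta> > 0\<close> F_nonneg[of r0] by (auto simp: \<epsilon>_def field_simps)
  obtain R where "R > r0" "\<epsilon> * ?F R > B + 1"
  proof -
    obtain R1 where "(B + 1) / \<epsilon> < ?F R1" using unbounded by blast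
    then have "B + 1 < \<epsilon> * ?F R1" using \<open>\<epsilon> > 0\<close> by (simp add: field_simps)
    moreover have "\<epsilon> * ?F R1 \<le> \<epsilon> * ?F (max R1 (r0 + 1))"
      using \<open>\<epsilon> > 0\<close> by (simp add: F.potential_mono)
    ultimately have "B + 1 < \<epsilon> * ?F (max R1 (r0 + 1))" by linarith
    then show thesis by (intro that) auto
  qed
  define \<delta> where "\<delta> = 1 / (?G R + 1)"
  have "\<delta> > 0" "\<delta> * ?G R < 1"
    using G_nonneg[of R] by (auto simp: \<delta>_def field_simps)
  \<comment> \<open>\<open>v\<close> is nonpositive at \<open>r = \<rho>\<close>, negative at \<open>r = R\<close> and positive at \<open>(r0, z0)\<close>,
    so its maximum over the annulus is interior.\<close>
  define v where "v y = u1 y - u2 y + (\<delta> * ?G (fst y) - \<epsilon> * ?F (fst y))" for y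
  let ?C = "{\<rho>..R} \<times> sphere (0::complex) 1"
  have C_sub: "?C \<subseteq> model_end \<rho>" by (auto simp: model_end_def)
  have "continuous_on ?C v"
    unfolding v_def
    by (intro continuous_intros continuous_on_subset[OF cont(1) C_sub]
          continuous_on_subset[OF cont(2) C_sub]
          continuous_on_compose2[OF F.potential_continuous]
          continuous_on_compose2[OF G.potential_continuous])
       auto
  moreover have "(r0, z0) \<in> ?C" using x0 \<open>R > r0\<close> by (auto simp: model_end_def)
  ultimately obtain r1 z1 where "(r1, z1) \<in> ?C" and max: "\<And>y. y \<in> ?C \<Longrightarrow> v y \<le> v (r1, z1)"
    using continuous_attains_sup[of ?C v] by (auto simp: compact_Times)
  have "v (r0, z0) = \<eta> + \<delta> * ?G r0 - \<epsilon> * ?F r0" by (simp add: v_def \<eta>_def)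
  moreover have "\<delta> * ?G r0 \<ge> 0" using \<open>\<delta> > 0\<close> G_nonneg[of r0] by simp
  ultimately have "v (r0, z0) > 0" using \<open>\<epsilon> * ?F r0 < \<eta> / 2\<close> \<open>\<eta> > 0\<close> by linarith
  then have "v (r1, z1) > 0" using max[OF \<open>(r0, z0) \<in> ?C\<close>] by simp
  moreover have "v (\<rho>, z1) \<le> 0" "v (R, z1) < 0"
    using \<open>(r1, z1) \<in> ?C\<close> boundary[of z1] B[of "(R, z1)"] \<open>\<epsilon> * ?F R > B + 1\<close> \<open>\<delta> * ?G R < 1\<close>
    by (auto simp: v_def model_end_def)
  ultimately have "\<rho> < r1" "r1 < R"
    using \<open>(r1, z1) \<in> ?C\<close> by (auto simp: less_le)
  moreover have "cmod z1 = 1" using \<open>(r1, z1) \<in> ?C\<close> by simp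
  ultimately show False
    by (rule harmonic_difference_barrier_no_interior_max
        [where \<epsilon> = \<epsilon>, OF profile \<open>\<rho> > 0\<close> harm1 harm2 \<open>\<delta> > 0\<close>])
       (use max in \<open>auto simp: v_def\<close>)
qed

section \<open>Parabolicity and exhaustion\<close>

lemma harmonic_coords_zero: "harmonic_coords w {(r, \<theta>). r > \<rho>} (pullback (\<lambda>_. 0))"
proof -
  have "pullback (\<lambda>_. 0) = (\<lambda>p. (\<lambda>_. 0::real) (fst p))" by (auto simp: pullback_def)
  then show ?thesis
    unfolding harmonic_coords_def
    using C2_on_radial[of \<rho> "\<lambda>_. 0" "\<lambda>_. 0" "\<lambda>_. 0"]
      model_lap_radial[of \<rho> "\<lambda>_. 0" "\<lambda>_. 0" "\<lambda>_. 0"]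
    by auto
qed

lemma parabolic_imp_potential_unbounded:
  assumes profile: "model_profile w" and "\<rho> > 0" and parabolic: "parabolic_model_end w \<rho>"
  shows "\<forall>M. \<exists>R. M < radial_potential w \<rho> (\<lambda>_. 1) R"
proof (rule ccontr)
  interpret F: radial_source w \<rho> "\<lambda>_. 1" "\<lambda>_. 0"
    by (rule radial_source_const[OF profile \<open>\<rho> > 0\<close>])
  let ?F = "radial_potential w \<rho> (\<lambda>_. 1)"
  assume "\<not> (\<forall>M. \<exists>R. M < ?F R)"
  then obtain M where M: "\<And>R. ?F R \<le> M" by (auto simp: not_less)
  define u where "u x = ?F (fst x)" for x :: "real \<times> complex"
  have "bounded (u ` model_end \<rho>)"
    unfolding bounded_iff u_def using M F.potential_nonneg by (auto intro!: exI[of _ M])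
  moreover have "continuous_on (model_end \<rho>) u"
    unfolding u_def
    by (rule continuous_on_compose2[OF F.potential_continuous])
       (auto intro: continuous_intros simp: model_end_def)
  moreover have "harmonic_coords w {(r, \<theta>). r > \<rho>} (pullback u)"
    unfolding u_def pullback_fst harmonic_coords_def
    using F.C2_on_potential F.model_lap_potential by auto
  moreover have "bounded ((\<lambda>_. 0::real) ` model_end \<rho>)"
    by (rule bounded_subset[of "{0}"]) auto
  moreover have "\<forall>z. cmod z = 1 \<longrightarrow> (0::real) = u (\<rho>, z)" by (simp add: u_def)
  moreover have "(\<rho> + 1, 1) \<in> model_end \<rho>" by (simp add: model_end_def)
  ultimately have "0 = u (\<rho> + 1, 1)"
    using parabolic[unfolded parabolic_model_end_def, rule_format, of "\<lambda>_. 0" u]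
      harmonic_coords_zero[of w \<rho>] continuous_on_const
    by blast
  moreover have "?F \<rho> < ?F (\<rho> + 1)"
  proof (rule DERIV_pos_imp_increasing_open[of \<rho> "\<rho> + 1" ?F])
    show "\<exists>y. DERIV ?F r :> y \<and> 0 < y" if "\<rho> < r" "r < \<rho> + 1" for r
      using F.potential_has_real_derivative[of r] F.w_pos[of r] that
      by (auto simp: F.potential_deriv_def)
    show "continuous_on {\<rho>..\<rho> + 1} ?F"
      by (rule continuous_on_subset[OF F.potential_continuous]) auto
  qed simp
  ultimately show False by (simp add: u_def)
qed

lemma potential_unbounded_imp_parabolic:
  assumes "model_profile w" "\<rho> > 0" "\<forall>M. \<exists>R. M < radial_potential w \<rho> (\<lambda>_. 1) R"
  shows "parabolic_model_end w \<rho>"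
  unfolding parabolic_model_end_def
proof (intro allI impI ballI)
  fix u1 u2 :: "real \<times> complex \<Rightarrow> real" and x
  assume "bounded (u1 ` model_end \<rho>) \<and> bounded (u2 ` model_end \<rho>) \<and>
    continuous_on (model_end \<rho>) u1 \<and> continuous_on (model_end \<rho>) u2 \<and>
    harmonic_coords w {(r, \<theta>). r > \<rho>} (pullback u1) \<and>
    harmonic_coords w {(r, \<theta>). r > \<rho>} (pullback u2) \<and>
    (\<forall>z. cmod z = 1 \<longrightarrow> u1 (\<rho>, z) = u2 (\<rho>, z))" and "x \<in> model_end \<rho>"
  then show "u1 x = u2 x"
    using harmonic_comparison[OF assms, of u1 u2 "fst x" "snd x"]
      harmonic_comparison[OF assms, of u2 u1 "fst x" "snd x"]
    by fastforce
qed

lemma one_superharmonic_exhaustion: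
  assumes profile: "model_profile w" and "\<rho> > 0"
    and unbounded: "\<forall>M. \<exists>R. M < radial_potential w \<rho> (\<lambda>t. integral {0..t} w) R"
  shows "one_superharmonic_off w \<rho> {}
           (\<lambda>x. 1 + radial_potential w \<rho> (\<lambda>t. integral {0..t} w) (fst x))"
    and "tends_to_infinity_on (model_end \<rho>)
           (\<lambda>x. 1 + radial_potential w \<rho> (\<lambda>t. integral {0..t} w) (fst x))"
proof -
  interpret P: radial_source w \<rho> "\<lambda>t. integral {0..t} w" w
    by (rule radial_source_area[OF profile \<open>\<rho> > 0\<close>])
  let ?P = "radial_potential w \<rho> (\<lambda>t. integral {0..t} w)"
  note area_nonneg = model_profile_integral_nonneg[OF profile]
  have v_deriv: "((\<lambda>r. 1 + ?P r) has_real_derivative P.potential_deriv r) (at r)" if "r > \<rho>" for r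
    using P.potential_has_real_derivative[OF that] by (auto intro: derivative_eq_intros)
  have lap: "model_lap w (\<lambda>p. 1 + ?P (fst p)) (r, \<theta>) = 1" if "r > \<rho>" for r \<theta>
    using model_lap_radial[OF v_deriv P.potential_deriv_has_real_derivative that]
      P.radial_ode[OF that] P.w_pos[of r] that by simp
  show "one_superharmonic_off w \<rho> {} (\<lambda>x. 1 + ?P (fst x))"
    unfolding one_superharmonic_off_def pullback_fst[of "\<lambda>r. 1 + ?P r"]
  proof (intro conjI ballI)
    show "continuous_on (model_end \<rho> - {}) (\<lambda>x. 1 + ?P (fst x))"
      by (auto intro!: continuous_on_compose2[OF P.potential_continuous] continuous_intros
          simp: model_end_def)
    show "C2_on {(r, \<theta>). r > \<rho> \<and> (r, cis \<theta>) \<notin> {}} (\<lambda>p. 1 + ?P (fst p))"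
      using C2_on_radial[OF v_deriv P.potential_deriv_has_real_derivative
          P.potential_deriv2_continuous] by simp
  qed (use lap P.potential_nonneg[OF area_nonneg] in auto)
  show "tends_to_infinity_on (model_end \<rho>) (\<lambda>x. 1 + ?P (fst x))"
    unfolding tends_to_infinity_on_def
  proof
    fix M
    obtain R where "M < ?P R" using unbounded by blast
    show "\<exists>C. compact C \<and> (\<forall>x\<in>model_end \<rho> - C. M \<le> 1 + ?P (fst x))"
    proof (intro exI conjI ballI)
      show "compact ({\<rho>..R} \<times> sphere (0::complex) 1)" by (simp add: compact_Times)
      fix x assume "x \<in> model_end \<rho> - {\<rho>..R} \<times> sphere 0 1"
      then have "R \<le> fst x" by (cases x) (auto simp: model_end_def)
      then show "M \<le> 1 + ?P (fst x)"
        using \<open>M < ?P R\<close> P.potential_mono[OF area_nonneg, of R "fst x"] by simp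
    qed
  qed
qed

theorem corollary2p12:
  fixes w :: "real \<Rightarrow> real" and \<rho> :: real
  assumes "model_profile w" and "\<rho> > 0"
  shows "(parabolic_model_end w \<rho> \<longleftrightarrow>
            (\<integral>\<^sup>+ t. ennreal (indicator {\<rho>..} t * (1 / w t)) \<partial>lborel) = \<infinity>)
       \<and> ((\<integral>\<^sup>+ t. ennreal (indicator {\<rho>..} t * (integral {0..t} w / w t)) \<partial>lborel) = \<infinity>
            \<longrightarrow> (\<exists>K v. compact K \<and> K \<subseteq> model_end \<rho> \<and>
                   one_superharmonic_off w \<rho> K v \<and>
                   tends_to_infinity_on (model_end \<rho> - K) v))"
proof -
  interpret F: radial_source w \<rho> "\<lambda>_. 1" "\<lambda>_. 0"
    by (rule radial_source_const[OF assms])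
  interpret P: radial_source w \<rho> "\<lambda>t. integral {0..t} w" w
    by (rule radial_source_area[OF assms])
  have "parabolic_model_end w \<rho> \<longleftrightarrow> (\<forall>M. \<exists>R. M < radial_potential w \<rho> (\<lambda>_. 1) R)"
    using parabolic_imp_potential_unbounded[OF assms] potential_unbounded_imp_parabolic[OF assms]
    by blast
  moreover note F.nn_integral_eq_infinity_iff_potential_unbounded
  moreover note P.nn_integral_eq_infinity_iff_potential_unbounded
    [OF model_profile_integral_nonneg[OF assms(1)]]
  ultimately show ?thesis
    using one_superharmonic_exhaustion[OF assms] by (auto intro!: exI[of _ "{}"])
qed

end
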